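(* Let $\mathsf{Ax}\subseteq\{\mathsf{N}_\Diamond,\mathsf{C}_\Diamond,\mathsf{I}_{\Diamond\Box}\}$. Then $\mathsf{CK}\oplus\mathsf{Ax}$ is a conservative extension of $\mathsf{CK}_\Box$ if and only if $\mathsf{N}_\Diamond\notin\mathsf{Ax}$ or $\mathsf{I}_{\Diamond\Box}\notin\mathsf{Ax}$.
   Context: Formulas: $\mathbf{L}$ is generated from a countably infinite set of propositional variables by $\varphi ::= p \mid \bot \mid \varphi\wedge\varphi \mid \varphi\vee\varphi \mid \varphi\to\varphi \mid \Box\varphi \mid \Diamond\varphi$. Axioms: $\mathsf{K}_\Box$: $\Box(\varphi\to\psi)\to(\Box\varphi\to\Box\psi)$; $\mathsf{K}_\Diamond$: $\Box(\varphi\to\psi)\to(\Diamond\varphi\to\Diamond\psi)$; $\mathsf{N}_\Diamond$: $\Diamond\bot\to\bot$; $\mathsf{C}_\Diamond$: $\Diamond(\varphi\vee\psi)\to\Diamond\varphi\vee\Diamond\psi$; $\mathsf{I}_{\Diamond\Box}$: $(\Diamond\varphi\to\Box\psi)\to\Box(\varphi\to\psi)$. For a set $\mathsf{Ax}$ of axioms, $\mathsf{CK}\oplus\mathsf{Ax}$ is the relation $\Gamma\vdash_{\mathsf{Ax}}\varphi$ inductively generated by: (Ax) $\Gamma\vdash\varphi$ whenever $\varphi$ is a substitution instance of an axiom of a standard Hilbert axiomatisation of intuitionistic propositional logic, of $\mathsf{K}_\Box$, of $\mathsf{K}_\Diamond$, or of an element of $\mathsf{Ax}$; (El) $\Gamma\vdash\varphi$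 if $\varphi\in\Gamma$; (MP) from $\Gamma\vdash\varphi$ and $\Gamma\vdash\varphi\to\psi$ infer $\Gamma\vdash\psi$; (Nec) from $\emptyset\vdash\varphi$ infer $\Gamma\vdash\Box\varphi$. A formula is derivable if $\emptyset\vdash_{\mathsf{Ax}}\varphi$. $\mathsf{CK}_\Box$ is the logic on $\Diamond$-free formulas axiomatised by intuitionistic propositional logic plus $\mathsf{K}_\Box$, closed under modus ponens and necessitation. A logic is a conservative extension of $\mathsf{CK}_\Box$ if its derivable $\Diamond$-free formulas are exactly the theorems of $\mathsf{CK}_\Box$. *)

theory Defs
  imports Main
begin

datatype fm = Var nat | Bot | And fm fm | Or fm fm | Imp fm fm | Box fm | Dia fm

fun diafree :: "fm \<Rightarrow> bool" where
  "diafree (Var p) = True"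
| "diafree Bot = True"
| "diafree (And a b) = (diafree a \<and> diafree b)"
| "diafree (Or a b) = (diafree a \<and> diafree b)"
| "diafree (Imp a b) = (diafree a \<and> diafree b)"
| "diafree (Box a) = diafree a"
| "diafree (Dia a) = False"

inductive ipc_ax :: "fm \<Rightarrow> bool" where
  A1: "ipc_ax (Imp a (Imp b a))"
| A2: "ipc_ax (Imp (Imp a (Imp b c)) (Imp (Imp a b) (Imp a c)))"
| A3: "ipc_ax (Imp (And a b) a)"
| A4: "ipc_ax (Imp (And a b) b)"
| A5: "ipc_ax (Imp a (Imp b (And a b)))"
| A6: "ipc_ax (Imp a (Or a b))"
| A7: "ipc_ax (Imp b (Or a b))"
| A8: "ipc_ax (Imp (Imp a c) (Imp (Imp b c) (Imp (Or a b) c)))"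
| A9: "ipc_ax (Imp Bot a)"

definition K_box :: "fm \<Rightarrow> bool" where
  "K_box f \<longleftrightarrow> (\<exists>a b. f = Imp (Box (Imp a b)) (Imp (Box a) (Box b)))"

definition K_dia :: "fm \<Rightarrow> bool" where
  "K_dia f \<longleftrightarrow> (\<exists>a b. f = Imp (Box (Imp a b)) (Imp (Dia a) (Dia b)))"

datatype axname = N_dia | C_dia | I_diabox

fun ax_inst :: "axname \<Rightarrow> fm \<Rightarrow> bool" where
  "ax_inst N_dia f \<longleftrightarrow> f = Imp (Dia Bot) Bot"
| "ax_inst C_dia f \<longleftrightarrow> (\<exists>a b. f = Imp (Dia (Or a b)) (Or (Dia a) (Dia b)))"
| "ax_inst I_diabox f \<longleftrightarrow> (\<exists>a b. f = Imp (Imp (Dia a) (Box b)) (Box (Imp a b)))"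

inductive deriv :: "axname set \<Rightarrow> fm set \<Rightarrow> fm \<Rightarrow> bool" where
  ax_ipc: "ipc_ax f \<Longrightarrow> deriv Ax \<Gamma> f"
| ax_kbox: "K_box f \<Longrightarrow> deriv Ax \<Gamma> f"
| ax_kdia: "K_dia f \<Longrightarrow> deriv Ax \<Gamma> f"
| ax_extra: "A \<in> Ax \<Longrightarrow> ax_inst A f \<Longrightarrow> deriv Ax \<Gamma> f"
| el: "f \<in> \<Gamma> \<Longrightarrow> deriv Ax \<Gamma> f"
| mp: "deriv Ax \<Gamma> f \<Longrightarrow> deriv Ax \<Gamma> (Imp f g) \<Longrightarrow> deriv Ax \<Gamma> g"
| nec: "deriv Ax {} f \<Longrightarrow> deriv Ax \<Gamma> (Box f)"

definition derivable :: "axname set \<Rightarrow> fm \<Rightarrow> bool" where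
  "derivable Ax f \<longleftrightarrow> deriv Ax {} f"

inductive ck_box :: "fm \<Rightarrow> bool" where
  cb_ipc: "ipc_ax f \<Longrightarrow> diafree f \<Longrightarrow> ck_box f"
| cb_kbox: "K_box f \<Longrightarrow> diafree f \<Longrightarrow> ck_box f"
| cb_mp: "ck_box f \<Longrightarrow> ck_box (Imp f g) \<Longrightarrow> ck_box g"
| cb_nec: "ck_box f \<Longrightarrow> ck_box (Box f)"

definition conservative_ext :: "axname set \<Rightarrow> bool" where
  "conservative_ext Ax \<longleftrightarrow> {f. diafree f \<and> derivable Ax f} = {f. ck_box f}"

end

theory Submission
  imports Defs
begin

text \<open>Replacing every subformula \<open>\<Diamond>\<phi>\<close> by a fixed \<open>\<Diamond>\<close>-free formula \<open>d\<close> maps derivations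
  of CK \<oplus> Ax to CK_Box-theorems as soon as the images of the extra axioms are CK_Box-theorems,
  and it fixes \<open>\<Diamond>\<close>-free formulas. The images of K_dia and C_dia are always theorems;
  \<open>d = \<top>\<close> also handles I_diabox and \<open>d = \<bottom>\<close> handles N_dia.

  With both N_dia and I_diabox, \<open>\<not>\<not>\<box>\<not>\<top> \<rightarrow> \<box>\<not>\<top>\<close> is derivable: from \<open>\<box>\<not>\<top>\<close> and \<open>\<Diamond>\<top>\<close>,
  K_dia gives \<open>\<Diamond>\<bottom>\<close> and hence \<open>\<bottom>\<close>, so under \<open>\<not>\<not>\<box>\<not>\<top>\<close> the hypothesis \<open>\<Diamond>\<top>\<close> is refuted
  and yields \<open>\<box>\<bottom>\<close>; I_diabox turns \<open>\<Diamond>\<top> \<rightarrow> \<box>\<bottom>\<close> into \<open>\<box>\<not>\<top>\<close>. (Writing \<open>\<not>\<top>\<close> rather than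
  \<open>\<bottom>\<close> matches the shape of K_dia and I_diabox.) This formula fails at the root of an
  intuitionistic model with worlds \<open>Root \<le> Above\<close> in which only \<open>Root\<close> has a modal
  successor: \<open>\<box>\<not>\<top>\<close> holds at \<open>Above\<close>, so \<open>\<not>\<not>\<box>\<not>\<top>\<close> holds at \<open>Root\<close>, where \<open>\<box>\<not>\<top>\<close> fails.\<close>

abbreviation Neg :: "fm \<Rightarrow> fm" where "Neg a \<equiv> Imp a Bot"
abbreviation Top :: fm where "Top \<equiv> Neg Bot"

fun subst_dia :: "fm \<Rightarrow> fm \<Rightarrow> fm" where
  "subst_dia d (Var p) = Var p"
| "subst_dia d Bot = Bot"
| "subst_dia d (And a b) = And (subst_dia d a) (subst_dia d b)"
| "subst_dia d (Or a b) = Or (subst_dia d a) (subst_dia d b)"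
| "subst_dia d (Imp a b) = Imp (subst_dia d a) (subst_dia d b)"
| "subst_dia d (Box a) = Box (subst_dia d a)"
| "subst_dia d (Dia a) = d"

lemma diafree_subst_dia: "diafree d \<Longrightarrow> diafree (subst_dia d f)"
  by (induction f) auto

lemma subst_dia_diafree: "diafree f \<Longrightarrow> subst_dia d f = f"
  by (induction f) auto

lemma ipc_ax_subst_dia: "ipc_ax f \<Longrightarrow> ipc_ax (subst_dia d f)"
  by (induction rule: ipc_ax.induct) (auto intro: ipc_ax.intros)

lemma ck_box_diafree: "ck_box f \<Longrightarrow> diafree f"
  by (induction rule: ck_box.induct) auto

lemma derivable_if_ck_box: "ck_box f \<Longrightarrow> derivable Ax f"
  unfolding derivable_def by (induction rule: ck_box.induct) (auto intro: deriv.intros)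

lemma ck_box_Top: "ck_box Top"
  by (auto intro: cb_ipc ipc_ax.intros)

lemma ck_box_weaken: "ck_box a \<Longrightarrow> diafree b \<Longrightarrow> ck_box (Imp b a)"
  by (rule cb_mp, assumption, rule cb_ipc) (auto intro: ipc_ax.intros simp: ck_box_diafree)

lemma ck_box_imp_distrib:
  "ck_box (Imp a (Imp b c)) \<Longrightarrow> ck_box (Imp a b) \<Longrightarrow> ck_box (Imp a c)"
  by (rule cb_mp, assumption, rule cb_mp, assumption)
    (auto intro: cb_ipc ipc_ax.intros dest!: ck_box_diafree)

lemma ck_box_imp_refl: "diafree a \<Longrightarrow> ck_box (Imp a a)"
  by (rule ck_box_imp_distrib[where b = "Imp a a"]) (auto intro: cb_ipc ipc_ax.intros)

lemma ck_box_imp_trans: "ck_box (Imp a b) \<Longrightarrow> ck_box (Imp b c) \<Longrightarrow> ck_box (Imp a c)"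
  by (rule ck_box_imp_distrib[of a b c], rule ck_box_weaken) (auto dest: ck_box_diafree)

lemma ck_box_imp_apply: "ck_box a \<Longrightarrow> diafree b \<Longrightarrow> ck_box (Imp (Imp a b) b)"
  by (rule ck_box_imp_distrib[of _ a], rule ck_box_imp_refl, rule_tac [2] ck_box_weaken)
    (auto simp: ck_box_diafree)

lemma ck_box_box_mono: "ck_box (Imp a b) \<Longrightarrow> ck_box (Imp (Box a) (Box b))"
  by (rule cb_mp[OF cb_nec], assumption, rule cb_kbox)
    (auto simp: K_box_def dest: ck_box_diafree)

lemma ck_box_subst_dia_K_dia: "K_dia f \<Longrightarrow> diafree d \<Longrightarrow> ck_box (subst_dia d f)"
  by (auto simp: K_dia_def diafree_subst_dia intro!: ck_box_weaken ck_box_imp_refl)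

lemma ck_box_subst_dia_C_dia: "ax_inst C_dia f \<Longrightarrow> diafree d \<Longrightarrow> ck_box (subst_dia d f)"
  by (auto intro!: cb_ipc ipc_ax.intros)

lemma ck_box_subst_Top_I_diabox: "ax_inst I_diabox f \<Longrightarrow> ck_box (subst_dia Top f)"
proof -
  assume "ax_inst I_diabox f"
  then obtain a b where f: "f = Imp (Imp (Dia a) (Box b)) (Box (Imp a b))" by auto
  let ?a = "subst_dia Top a" and ?b = "subst_dia Top b"
  have "ck_box (Imp (Imp Top (Box ?b)) (Box ?b))"
    by (simp add: ck_box_imp_apply ck_box_Top diafree_subst_dia)
  moreover have "ck_box (Imp (Box ?b) (Box (Imp ?a ?b)))"
    by (intro ck_box_box_mono cb_ipc) (auto intro: ipc_ax.intros simp: diafree_subst_dia)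
  ultimately show ?thesis
    unfolding f by (simp add: ck_box_imp_trans)
qed

lemma ck_box_subst_dia_if_derivable:
  assumes "derivable Ax f" and "diafree d"
    and extra: "\<And>A g. A \<in> Ax \<Longrightarrow> ax_inst A g \<Longrightarrow> ck_box (subst_dia d g)"
  shows "ck_box (subst_dia d f)"
proof -
  have "deriv Ax' \<Gamma> f \<Longrightarrow> \<Gamma> = {} \<Longrightarrow> Ax' = Ax \<Longrightarrow> ck_box (subst_dia d f)" for Ax' \<Gamma> f
  proof (induction rule: deriv.induct)
    case (ax_ipc f) then show ?case
      by (simp add: cb_ipc ipc_ax_subst_dia diafree_subst_dia \<open>diafree d\<close>)
  next
    case (ax_kbox f) then show ?case
      by (intro cb_kbox) (auto simp: K_box_def diafree_subst_dia \<open>diafree d\<close>)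
  next
    case (ax_kdia f) then show ?case
      by (simp add: ck_box_subst_dia_K_dia \<open>diafree d\<close>)
  next
    case (ax_extra A Ax' f) then show ?case
      using extra by blast
  next
    case (mp Ax' \<Gamma> f g) then show ?case
      by (auto intro: cb_mp)
  next
    case (nec Ax' f) then show ?case
      by (simp add: cb_nec)
  qed simp
  with \<open>derivable Ax f\<close> show ?thesis
    unfolding derivable_def by blast
qed

lemma conservative_ext_if_subst_dia:
  assumes "diafree d" and "\<And>A g. A \<in> Ax \<Longrightarrow> ax_inst A g \<Longrightarrow> ck_box (subst_dia d g)"
  shows "conservative_ext Ax"
proof -
  have "ck_box f" if "diafree f" "derivable Ax f" for f
    using ck_box_subst_dia_if_derivable[OF that(2) assms] subst_dia_diafree[OF that(1)] by simp
  then show ?thesis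
    unfolding conservative_ext_def by (auto simp: ck_box_diafree derivable_if_ck_box)
qed

lemma conservative_ext_without_N_dia: "N_dia \<notin> Ax \<Longrightarrow> conservative_ext Ax"
proof (rule conservative_ext_if_subst_dia[where d = Top])
  fix A g assume "A \<in> Ax" "N_dia \<notin> Ax" "ax_inst A g"
  then show "ck_box (subst_dia Top g)"
    by (cases A) (auto simp: ck_box_subst_dia_C_dia ck_box_subst_Top_I_diabox)
qed simp

lemma conservative_ext_without_I_diabox: "I_diabox \<notin> Ax \<Longrightarrow> conservative_ext Ax"
proof (rule conservative_ext_if_subst_dia[where d = Bot])
  fix A g assume "A \<in> Ax" "I_diabox \<notin> Ax" "ax_inst A g"
  then show "ck_box (subst_dia Bot g)"
    by (cases A) (auto simp: ck_box_subst_dia_C_dia ck_box_Top)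
qed simp

datatype world = Root | Above | Successor

definition world_le :: "world \<Rightarrow> world \<Rightarrow> bool" where
  "world_le x y \<longleftrightarrow> x = y \<or> (x = Root \<and> y = Above)"

definition world_R :: "world \<Rightarrow> world \<Rightarrow> bool" where
  "world_R x y \<longleftrightarrow> x = Root \<and> y = Successor"

fun sat :: "world \<Rightarrow> fm \<Rightarrow> bool" where
  "sat w (Var p) = False"
| "sat w Bot = False"
| "sat w (And a b) = (sat w a \<and> sat w b)"
| "sat w (Or a b) = (sat w a \<or> sat w b)"
| "sat w (Imp a b) = (\<forall>w'. world_le w w' \<longrightarrow> sat w' a \<longrightarrow> sat w' b)"
| "sat w (Box a) = (\<forall>w' v. world_le w w' \<longrightarrow> world_R w' v \<longrightarrow> sat v a)"
| "sat w (Dia a) = False"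

lemma sat_persistent: "sat w f \<Longrightarrow> world_le w w' \<Longrightarrow> sat w' f"
  by (induction f arbitrary: w w') (auto simp: world_le_def)

lemma sat_if_ck_box: "ck_box f \<Longrightarrow> sat w f"
proof (induction arbitrary: w rule: ck_box.induct)
  case (cb_ipc f)
  then show ?case
    by (induction arbitrary: w rule: ipc_ax.induct)
      (auto simp: world_le_def intro: sat_persistent)
next
  case (cb_kbox f) then show ?case
    by (auto simp: K_box_def world_le_def)
qed (auto simp: world_le_def)

lemma sat_Box_Neg_Top_iff: "sat w (Box (Neg Top)) \<longleftrightarrow> w \<noteq> Root"
  by (cases w) (auto simp: world_le_def world_R_def)

lemma not_sat_Neg_Box_Neg_Top: "\<not> sat w (Neg (Box (Neg Top)))"
proof -
  obtain w' where "world_le w w'" "w' \<noteq> Root"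
    by (cases w) (auto simp: world_le_def)
  then show ?thesis
    using sat_Box_Neg_Top_iff by (simp only: sat.simps) blast
qed

lemma not_ck_box_stable_Box_Neg_Top:
  "\<not> ck_box (Imp (Neg (Neg (Box (Neg Top)))) (Box (Neg Top)))"
proof
  assume "ck_box (Imp (Neg (Neg (Box (Neg Top)))) (Box (Neg Top)))"
  then have "sat Root (Imp (Neg (Neg (Box (Neg Top)))) (Box (Neg Top)))"
    by (rule sat_if_ck_box)
  moreover have "sat Root (Neg (Neg (Box (Neg Top))))"
    using not_sat_Neg_Box_Neg_Top by (simp only: sat.simps) blast
  ultimately show False
    using sat_Box_Neg_Top_iff[of Root] world_le_def by (simp only: sat.simps) blast
qed

lemma deriv_weaken: "deriv Ax \<Gamma> f \<Longrightarrow> deriv Ax \<Gamma> (Imp a f)"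
  by (meson A1 deriv.ax_ipc deriv.mp)

lemma deriv_imp_refl: "deriv Ax \<Gamma> (Imp a a)"
  by (meson A1 A2 deriv.ax_ipc deriv.mp)

lemma deriv_deduction: "deriv Ax (insert a \<Gamma>) f \<Longrightarrow> deriv Ax \<Gamma> (Imp a f)"
proof (induction Ax "insert a \<Gamma>" f rule: deriv.induct)
  case (el f Ax)
  then show ?case
    by (auto intro: deriv_imp_refl deriv_weaken deriv.el)
next
  case (mp Ax f g)
  then show ?case
    by (meson A2 deriv.ax_ipc deriv.mp)
qed (auto intro: deriv_weaken deriv.intros)

lemma derivable_stable_Box_Neg_Top:
  assumes N: "N_dia \<in> Ax" and I: "I_diabox \<in> Ax"
  shows "derivable Ax (Imp (Neg (Neg (Box (Neg Top)))) (Box (Neg Top)))"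
proof -
  let ?h = "Neg (Neg (Box (Neg Top)))"
  let ?\<Gamma> = "{Box (Neg Top), Dia Top, ?h}"
  have "deriv Ax ?\<Gamma> (Imp (Box (Neg Top)) (Imp (Dia Top) (Dia Bot)))"
    by (rule deriv.ax_kdia) (auto simp: K_dia_def)
  then have "deriv Ax ?\<Gamma> (Imp (Dia Top) (Dia Bot))"
    by (rule deriv.mp[rotated]) (simp add: deriv.el)
  then have "deriv Ax ?\<Gamma> (Dia Bot)"
    by (rule deriv.mp[rotated]) (simp add: deriv.el)
  then have "deriv Ax ?\<Gamma> Bot"
    by (rule deriv.mp) (simp add: deriv.ax_extra[OF N])
  then have "deriv Ax {Dia Top, ?h} (Neg (Box (Neg Top)))"
    by (rule deriv_deduction)
  then have "deriv Ax {Dia Top, ?h} Bot"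
    by (rule deriv.mp) (simp add: deriv.el)
  then have "deriv Ax {Dia Top, ?h} (Box Bot)"
    by (rule deriv.mp) (simp add: deriv.ax_ipc A9)
  then have "deriv Ax {?h} (Imp (Dia Top) (Box Bot))"
    by (rule deriv_deduction)
  then have "deriv Ax {?h} (Box (Neg Top))"
    by (rule deriv.mp) (auto intro: deriv.ax_extra[OF I])
  then show ?thesis
    unfolding derivable_def by (rule deriv_deduction)
qed

theorem mainTheorem13:
  fixes Ax :: "axname set"
  shows "conservative_ext Ax \<longleftrightarrow> (N_dia \<notin> Ax \<or> I_diabox \<notin> Ax)"
proof
  assume "conservative_ext Ax"
  then show "N_dia \<notin> Ax \<or> I_diabox \<notin> Ax"
    using derivable_stable_Box_Neg_Top not_ck_box_stable_Box_Neg_Top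
    unfolding conservative_ext_def by auto
next
  assume "N_dia \<notin> Ax \<or> I_diabox \<notin> Ax"
  then show "conservative_ext Ax"
    using conservative_ext_without_N_dia conservative_ext_without_I_diabox by blast
qed

end
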